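(* If $K\subseteq\beta\mathbb{T}$ is a nonempty compact set closed under $\hat{}$ which is minimal among nonempty compact subsets of $\beta\mathbb{T}$ closed under $\hat{}$, then $K$ is not separable.
   Context: For $a,b\subseteq(0,1]$ put $a\,\hat{}\,b=\tfrac12 a\cup\tfrac12(b+1)$; $\mathbb{T}$ is the set generated from $\mathbf{1}=\{1\}$ by $\hat{}$ (the free binary system on one generator). $\beta\mathbb{T}$ is the Čech–Stone compactification of the discrete set $\mathbb{T}$ (the space of ultrafilters on $\mathbb{T}$ with its usual compact topology), and $\hat{}$ is extended to $\beta\mathbb{T}$ by: $W\in\mathcal{U}\,\hat{}\,\mathcal{V}$ iff $\{u\in\mathbb{T}:\{v\in\mathbb{T}:u\,\hat{}\,v\in W\}\in\mathcal{V}\}\in\mathcal{U}$. A subset $K$ is closed under $\hat{}$ if $\xi\,\hat{}\,\eta\in K$ whenever $\xi,\eta\in K$. *)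

theory Defs
  imports "HOL-Analysis.Analysis"
begin

definition hat :: "real set \<Rightarrow> real set \<Rightarrow> real set" where
  "hat a b = (\<lambda>x. x / 2) ` a \<union> (\<lambda>x. (x + 1) / 2) ` b"

text \<open>The free binary system generated from {1} by hat.\<close>
inductive_set TT :: "real set set" where
  one: "{1} \<in> TT"
| hat: "a \<in> TT \<Longrightarrow> b \<in> TT \<Longrightarrow> hat a b \<in> TT"

definition ultrafilter_on :: "'a set \<Rightarrow> 'a set set \<Rightarrow> bool" where
  "ultrafilter_on X U \<longleftrightarrow>
     U \<subseteq> Pow X \<and> X \<in> U \<and> {} \<notin> U \<and>
     (\<forall>A B. A \<in> U \<and> A \<subseteq> B \<and> B \<subseteq> X \<longrightarrow> B \<in> U) \<and>
     (\<forall>A B. A \<in> U \<and> B \<in> U \<longrightarrow> A \<inter> B \<in> U) \<and>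
     (\<forall>A. A \<subseteq> X \<longrightarrow> A \<in> U \<or> X - A \<in> U)"

text \<open>The Cech-Stone compactification beta TT as a set of ultrafilters.\<close>
definition betaT :: "real set set set set" where
  "betaT = {U. ultrafilter_on TT U}"

definition betaT_top :: "real set set set topology" where
  "betaT_top = topology_generated_by {{U \<in> betaT. A \<in> U} | A. A \<subseteq> TT}"

text \<open>Extension of hat to beta TT.\<close>
definition hatU :: "real set set set \<Rightarrow> real set set set \<Rightarrow> real set set set" where
  "hatU U V = {W. W \<subseteq> TT \<and> {u \<in> TT. {v \<in> TT. hat u v \<in> W} \<in> V} \<in> U}"

definition closed_hat :: "real set set set set \<Rightarrow> bool" where
  "closed_hat K \<longleftrightarrow> (\<forall>\<xi>\<in>K. \<forall>\<eta>\<in>K. hatU \<xi> \<eta> \<in> K)"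

end

theory Submission
  imports Defs "HOL-Library.Countable"
begin

text \<open>
  Right translations \<xi> \<mapsto> \<xi> ^ a of \<beta>T are continuous and injective (the left factor of
  \<xi> ^ a is \<xi>), and translations by a \<noteq> b have disjoint images (the right factor of \<xi> ^ a
  is a). As \<zeta> ^ \<zeta> \<noteq> \<zeta> always, a nonempty compact ^-closed K has two embeddings into
  itself with disjoint images, and a Cantor-scheme argument shows that K is uncountable.
  In a minimal K every element is nonprincipal and contains no left cone t ^ T: the
  elements with these properties form a compact ^-closed subset, which is nonempty since
  the uncountable K contains a nonprincipal \<xi>, and then \<xi> ^ \<xi> is such an element.

  Now let d_0, d_1, ... be dense in K. Choose \<eta> \<in> K different from the right factors of
  all d_n, and B_n \<notin> \<eta> with T ^ B_n \<in> d_n. For an enumeration x_0, x_1, ... of T the set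
  W = \<Union>_m x_m ^ (T - (B_0 \<union> ... \<union> B_m)) belongs to z ^ \<eta> \<in> K but to no d_n, as
  W \<inter> T ^ B_n is covered by the finitely many left cones x_m ^ T with m < n.
\<close>

lemma TT_subset: "t \<in> TT \<Longrightarrow> t \<subseteq> {0<..1}"
  by (induction rule: TT.induct) (auto simp: hat_def)

lemma TT_nonempty: "t \<in> TT \<Longrightarrow> t \<noteq> {}"
  by (induction rule: TT.induct) (auto simp: hat_def)

lemma hat_lower_half:
  assumes "u \<subseteq> {0<..1}" "v \<subseteq> {0<..1}"
  shows "(\<lambda>x. 2 * x) ` (hat u v \<inter> {..1/2}) = u"
proof -
  have "hat u v \<inter> {..1/2} = (\<lambda>x. x / 2) ` u"
    using assms by (force simp: hat_def)
  then show ?thesis by (simp add: image_image)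
qed

lemma hat_upper_half:
  assumes "u \<subseteq> {0<..1}" "v \<subseteq> {0<..1}"
  shows "(\<lambda>x. 2 * x - 1) ` (hat u v \<inter> {1/2<..}) = v"
proof -
  have "hat u v \<inter> {1/2<..} = (\<lambda>x. (x + 1) / 2) ` v"
    using assms by (force simp: hat_def)
  then show ?thesis by (simp add: image_image field_simps)
qed

lemma hat_eq_iff:
  assumes "u \<in> TT" "v \<in> TT" "u' \<in> TT" "v' \<in> TT"
  shows "hat u v = hat u' v' \<longleftrightarrow> u = u' \<and> v = v'"
proof
  assume "hat u v = hat u' v'"
  then show "u = u' \<and> v = v'"
    using hat_lower_half[of u v] hat_upper_half[of u v] hat_lower_half[of u' v'] hat_upper_half[of u' v']
      TT_subset assms by auto
qed simp

lemma hat_neq_one: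
  assumes "u \<in> TT" shows "hat u v \<noteq> {1}"
proof -
  obtain x where "x \<in> u" using TT_nonempty assms by blast
  moreover have "x \<le> 1" using \<open>x \<in> u\<close> TT_subset assms by fastforce
  ultimately have "x / 2 \<in> hat u v" "x / 2 \<noteq> 1" by (auto simp: hat_def)
  then show ?thesis by blast
qed

lemma TT_one_or_hat: "t \<in> TT \<Longrightarrow> t = {1} \<or> (\<exists>u\<in>TT. \<exists>v\<in>TT. t = hat u v)"
  by (cases rule: TT.cases) auto

datatype bintree = Leaf | Node bintree bintree

instance bintree :: countable by countable_datatype

primrec bintree_set :: "bintree \<Rightarrow> real set" where
  "bintree_set Leaf = {1}"
| "bintree_set (Node l r) = hat (bintree_set l) (bintree_set r)"

lemma countable_TT: "countable TT"
proof -
  have "TT \<subseteq> range bintree_set"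
  proof
    fix t assume "t \<in> TT"
    then show "t \<in> range bintree_set"
    proof (induction rule: TT.induct)
      case one
      show ?case by (rule range_eqI[of _ _ Leaf]) simp
    next
      case (hat a b)
      then obtain l r where "a = bintree_set l" "b = bintree_set r" by blast
      then show ?case by (intro range_eqI[of _ _ "Node l r"]) simp
    qed
  qed
  then show ?thesis by (rule countable_subset) simp
qed

lemma uf_subset: "\<xi> \<in> betaT \<Longrightarrow> A \<in> \<xi> \<Longrightarrow> A \<subseteq> TT"
  by (auto simp: betaT_def ultrafilter_on_def)

lemma uf_TT: "\<xi> \<in> betaT \<Longrightarrow> TT \<in> \<xi>"
  by (auto simp: betaT_def ultrafilter_on_def)

lemma uf_empty: "\<xi> \<in> betaT \<Longrightarrow> {} \<notin> \<xi>"
  by (auto simp: betaT_def ultrafilter_on_def)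

lemma uf_nonempty: "\<xi> \<in> betaT \<Longrightarrow> A \<in> \<xi> \<Longrightarrow> A \<noteq> {}"
  using uf_empty by blast

lemma uf_mono: "\<xi> \<in> betaT \<Longrightarrow> A \<in> \<xi> \<Longrightarrow> A \<subseteq> B \<Longrightarrow> B \<subseteq> TT \<Longrightarrow> B \<in> \<xi>"
  unfolding betaT_def ultrafilter_on_def by blast

lemma uf_Int: "\<xi> \<in> betaT \<Longrightarrow> A \<in> \<xi> \<Longrightarrow> B \<in> \<xi> \<Longrightarrow> A \<inter> B \<in> \<xi>"
  unfolding betaT_def ultrafilter_on_def by blast

lemma uf_Diff_iff:
  assumes "\<xi> \<in> betaT" "A \<subseteq> TT" shows "TT - A \<in> \<xi> \<longleftrightarrow> A \<notin> \<xi>"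
proof
  assume "TT - A \<in> \<xi>"
  then show "A \<notin> \<xi>" using uf_Int[OF assms(1), of A "TT - A"] uf_empty[OF assms(1)] by auto
next
  assume "A \<notin> \<xi>"
  then show "TT - A \<in> \<xi>" using assms unfolding betaT_def ultrafilter_on_def by blast
qed

lemma uf_Un: "\<xi> \<in> betaT \<Longrightarrow> A \<subseteq> TT \<Longrightarrow> B \<subseteq> TT \<Longrightarrow> A \<notin> \<xi> \<Longrightarrow> B \<notin> \<xi> \<Longrightarrow> A \<union> B \<notin> \<xi>"
  using uf_Int[of \<xi> "TT - A" "TT - B"] uf_Diff_iff[of \<xi> A] uf_Diff_iff[of \<xi> B]
    uf_Diff_iff[of \<xi> "A \<union> B"] by (simp add: Diff_Un)

lemma uf_UN_notin:
  assumes "\<xi> \<in> betaT" "finite I" "\<And>i. i \<in> I \<Longrightarrow> A i \<subseteq> TT" "\<And>i. i \<in> I \<Longrightarrow> A i \<notin> \<xi>"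
  shows "(\<Union>i\<in>I. A i) \<notin> \<xi>"
  using assms(2-4)
proof (induction rule: finite_induct)
  case empty
  then show ?case using uf_empty[OF assms(1)] by simp
next
  case (insert i I)
  have "A i \<subseteq> TT" "A i \<notin> \<xi>" "(\<Union>i\<in>I. A i) \<subseteq> TT" "(\<Union>i\<in>I. A i) \<notin> \<xi>"
    using insert by auto
  then show ?case using uf_Un[OF assms(1)] by simp
qed

lemma uf_const: "\<xi> \<in> betaT \<Longrightarrow> (if P then TT else {}) \<in> \<xi> \<longleftrightarrow> P"
  using uf_TT uf_empty by auto

lemma uf_subset_imp_eq:
  assumes "\<xi> \<in> betaT" "\<eta> \<in> betaT" "\<xi> \<subseteq> \<eta>" shows "\<xi> = \<eta>"
proof -
  have "A \<in> \<xi>" if "A \<in> \<eta>" for A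
    using that assms uf_subset[of \<eta> A] uf_Diff_iff[of \<xi> A] uf_Diff_iff[of \<eta> A] by blast
  then show ?thesis using assms(3) by blast
qed

lemma hatU_mem: "W \<in> hatU \<xi> \<eta> \<longleftrightarrow> W \<subseteq> TT \<and> {u \<in> TT. {v \<in> TT. hat u v \<in> W} \<in> \<eta>} \<in> \<xi>"
  by (simp add: hatU_def)

lemma uf_pullback_betaT:
  assumes \<xi>: "\<xi> \<in> betaT"
    and top: "\<phi> TT \<in> \<xi>" and bot: "\<phi> {} = {}"
    and range: "\<And>A. A \<subseteq> TT \<Longrightarrow> \<phi> A \<subseteq> TT"
    and mono: "\<And>A B. A \<subseteq> B \<Longrightarrow> B \<subseteq> TT \<Longrightarrow> \<phi> A \<subseteq> \<phi> B"
    and Int: "\<And>A B. A \<subseteq> TT \<Longrightarrow> B \<subseteq> TT \<Longrightarrow> \<phi> A \<inter> \<phi> B \<subseteq> \<phi> (A \<inter> B)"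
    and Diff: "\<And>A. A \<subseteq> TT \<Longrightarrow> \<phi> TT - \<phi> A \<subseteq> \<phi> (TT - A)"
  shows "{A. A \<subseteq> TT \<and> \<phi> A \<in> \<xi>} \<in> betaT"
proof -
  define U where "U = {A. A \<subseteq> TT \<and> \<phi> A \<in> \<xi>}"
  have mem: "A \<in> U \<longleftrightarrow> A \<subseteq> TT \<and> \<phi> A \<in> \<xi>" for A by (simp add: U_def)
  have "ultrafilter_on TT U"
    unfolding ultrafilter_on_def
  proof (intro conjI allI impI)
    show "U \<subseteq> Pow TT" "TT \<in> U" "{} \<notin> U"
      using top bot uf_empty[OF \<xi>] by (auto simp: mem)
  next
    fix A B assume "A \<in> U \<and> A \<subseteq> B \<and> B \<subseteq> TT"
    then show "B \<in> U"
      using uf_mono[OF \<xi>, of "\<phi> A" "\<phi> B"] mono[of A B] range[of B] by (simp add: mem)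
  next
    fix A B assume "A \<in> U \<and> B \<in> U"
    then show "A \<inter> B \<in> U"
      using uf_Int[OF \<xi>, of "\<phi> A" "\<phi> B"] uf_mono[OF \<xi>, of _ "\<phi> (A \<inter> B)"] Int[of A B]
        range[of "A \<inter> B"] by (auto simp: mem)
  next
    fix A assume A: "A \<subseteq> TT"
    have "\<phi> (TT - A) \<in> \<xi>" if "\<phi> A \<notin> \<xi>"
    proof -
      have "TT - \<phi> A \<in> \<xi>" using that uf_Diff_iff[OF \<xi> range[OF A]] by blast
      then have "\<phi> TT \<inter> (TT - \<phi> A) \<in> \<xi>" by (rule uf_Int[OF \<xi> top])
      moreover have "\<phi> TT \<inter> (TT - \<phi> A) \<subseteq> \<phi> (TT - A)" using Diff[OF A] by blast
      ultimately show ?thesis using uf_mono[OF \<xi>] range[of "TT - A"] by blast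
    qed
    then show "A \<in> U \<or> TT - A \<in> U"
      using A by (auto simp: mem)
  qed
  then show ?thesis by (simp add: betaT_def U_def)
qed

lemma hatU_betaT:
  assumes \<xi>: "\<xi> \<in> betaT" and \<eta>: "\<eta> \<in> betaT"
  shows "hatU \<xi> \<eta> \<in> betaT"
proof -
  define pre where "pre W = {u \<in> TT. {v \<in> TT. hat u v \<in> W} \<in> \<eta>}" for W
  have "hatU \<xi> \<eta> = {W. W \<subseteq> TT \<and> pre W \<in> \<xi>}"
    by (simp add: hatU_def pre_def)
  also have "\<dots> \<in> betaT"
  proof (rule uf_pullback_betaT[OF \<xi>])
    have "{v \<in> TT. hat u v \<in> TT} = TT" if "u \<in> TT" for u
      using that TT.hat by blast
    then have "pre TT = TT"
      using uf_TT[OF \<eta>] by (auto simp: pre_def)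
    then show "pre TT \<in> \<xi>"
      using uf_TT[OF \<xi>] by simp
    show "pre {} = {}" using uf_empty[OF \<eta>] by (simp add: pre_def)
    show "pre A \<subseteq> TT" for A by (auto simp: pre_def)
    show "pre A \<subseteq> pre B" if "A \<subseteq> B" for A B
    proof
      fix u assume "u \<in> pre A"
      moreover have "{v \<in> TT. hat u v \<in> A} \<subseteq> {v \<in> TT. hat u v \<in> B}" using that by blast
      ultimately show "u \<in> pre B"
        unfolding pre_def using uf_mono[OF \<eta>, of "{v \<in> TT. hat u v \<in> A}"] by blast
    qed
    show "pre A \<inter> pre B \<subseteq> pre (A \<inter> B)" for A B
    proof
      fix u assume "u \<in> pre A \<inter> pre B"
      then have "u \<in> TT" and "{v \<in> TT. hat u v \<in> A} \<inter> {v \<in> TT. hat u v \<in> B} \<in> \<eta>"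
        using uf_Int[OF \<eta>] by (auto simp: pre_def)
      moreover have "{v \<in> TT. hat u v \<in> A} \<inter> {v \<in> TT. hat u v \<in> B} = {v \<in> TT. hat u v \<in> A \<inter> B}"
        by blast
      ultimately show "u \<in> pre (A \<inter> B)" by (simp add: pre_def)
    qed
    show "pre TT - pre A \<subseteq> pre (TT - A)" for A
    proof -
      have "{v \<in> TT. hat u v \<in> TT - A} = TT - {v \<in> TT. hat u v \<in> A}" if "u \<in> TT" for u
        using that TT.hat by blast
      then show ?thesis unfolding pre_def using uf_Diff_iff[OF \<eta>] by auto
    qed
  qed
  finally show ?thesis .
qed

definition hatR :: "real set set \<Rightarrow> real set set" where
  "hatR B = {hat u v | u v. u \<in> TT \<and> v \<in> B}"

definition hatL :: "real set set \<Rightarrow> real set set" where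
  "hatL A = {hat u v | u v. u \<in> A \<and> v \<in> TT}"

lemma hatR_subset: "B \<subseteq> TT \<Longrightarrow> hatR B \<subseteq> TT"
  unfolding hatR_def using TT.hat by blast

lemma hatL_subset: "A \<subseteq> TT \<Longrightarrow> hatL A \<subseteq> TT"
  unfolding hatL_def using TT.hat by blast

lemma hatR_mono: "A \<subseteq> B \<Longrightarrow> hatR A \<subseteq> hatR B"
  by (auto simp: hatR_def)

lemma hat_mem_hatR_iff:
  assumes "u \<in> TT" "v \<in> TT" "B \<subseteq> TT"
  shows "hat u v \<in> hatR B \<longleftrightarrow> v \<in> B"
proof
  assume "hat u v \<in> hatR B"
  then obtain u' v' where "u' \<in> TT" "v' \<in> B" "hat u v = hat u' v'"
    by (auto simp: hatR_def)
  then show "v \<in> B" using hat_eq_iff assms by blast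
qed (use assms in \<open>auto simp: hatR_def\<close>)

lemma hatR_Int:
  assumes "A \<subseteq> TT" "B \<subseteq> TT" shows "hatR (A \<inter> B) = hatR A \<inter> hatR B"
proof
  show "hatR A \<inter> hatR B \<subseteq> hatR (A \<inter> B)"
  proof
    fix e assume e: "e \<in> hatR A \<inter> hatR B"
    then obtain u v where uv: "u \<in> TT" "v \<in> A" "e = hat u v" by (auto simp: hatR_def)
    moreover have "v \<in> B" using e uv hat_mem_hatR_iff assms by blast
    ultimately show "e \<in> hatR (A \<inter> B)" by (auto simp: hatR_def)
  qed
qed (simp add: hatR_mono)

lemma hatR_Diff:
  assumes "A \<subseteq> TT" shows "hatR (TT - A) = hatR TT - hatR A"
proof
  show "hatR (TT - A) \<subseteq> hatR TT - hatR A"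
  proof
    fix e assume "e \<in> hatR (TT - A)"
    then obtain u v where "u \<in> TT" "v \<in> TT - A" "e = hat u v" by (auto simp: hatR_def)
    then show "e \<in> hatR TT - hatR A" using hat_mem_hatR_iff assms by blast
  qed
  show "hatR TT - hatR A \<subseteq> hatR (TT - A)"
  proof
    fix e assume e: "e \<in> hatR TT - hatR A"
    then obtain u v where uv: "u \<in> TT" "v \<in> TT" "e = hat u v" by (auto simp: hatR_def)
    then have "v \<notin> A" using e hat_mem_hatR_iff assms by blast
    then show "e \<in> hatR (TT - A)" using uv by (auto simp: hatR_def)
  qed
qed

text \<open>The images of an ultrafilter under the projections \<open>hat u v \<mapsto> v\<close> and \<open>hat u v \<mapsto> u\<close>.\<close>

definition right_factor :: "real set set set \<Rightarrow> real set set set" where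
  "right_factor \<xi> = {B. B \<subseteq> TT \<and> hatR B \<in> \<xi>}"

definition left_factor :: "real set set set \<Rightarrow> real set set set" where
  "left_factor \<xi> = {A. A \<subseteq> TT \<and> hatL A \<in> \<xi>}"

lemma right_factor_hatU:
  assumes "\<xi> \<in> betaT" "\<eta> \<in> betaT" shows "right_factor (hatU \<xi> \<eta>) = \<eta>"
proof -
  have "B \<in> right_factor (hatU \<xi> \<eta>) \<longleftrightarrow> B \<in> \<eta>" if "B \<subseteq> TT" for B
  proof -
    have "{v \<in> TT. hat u v \<in> hatR B} = B" if "u \<in> TT" for u
      using \<open>B \<subseteq> TT\<close> that hat_eq_iff by (auto simp: hatR_def)
    then have "{u \<in> TT. {v \<in> TT. hat u v \<in> hatR B} \<in> \<eta>} = (if B \<in> \<eta> then TT else {})"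
      by auto
    then show ?thesis using that hatR_subset[OF that] uf_const[OF assms(1)] by (simp add: right_factor_def hatU_mem)
  qed
  then show ?thesis using uf_subset[OF assms(2)] by (auto simp: right_factor_def)
qed

lemma left_factor_hatU:
  assumes "\<xi> \<in> betaT" "\<eta> \<in> betaT" shows "left_factor (hatU \<xi> \<eta>) = \<xi>"
proof -
  have "A \<in> left_factor (hatU \<xi> \<eta>) \<longleftrightarrow> A \<in> \<xi>" if "A \<subseteq> TT" for A
  proof -
    have "{v \<in> TT. hat u v \<in> hatL A} = (if u \<in> A then TT else {})" if "u \<in> TT" for u
      using \<open>A \<subseteq> TT\<close> that hat_eq_iff by (auto simp: hatL_def)
    then have "{u \<in> TT. {v \<in> TT. hat u v \<in> hatL A} \<in> \<eta>} = {u \<in> TT. u \<in> A}"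
      using uf_TT[OF assms(2)] uf_empty[OF assms(2)] by (auto split: if_splits)
    also have "\<dots> = A" using \<open>A \<subseteq> TT\<close> by blast
    finally have "{u \<in> TT. {v \<in> TT. hat u v \<in> hatL A} \<in> \<eta>} = A" .
    then show ?thesis using that hatL_subset by (simp add: left_factor_def hatU_mem)
  qed
  then show ?thesis using uf_subset[OF assms(1)] by (auto simp: left_factor_def)
qed

lemma inj_on_hatU_right:
  assumes "\<eta> \<in> betaT" shows "inj_on (\<lambda>\<xi>. hatU \<xi> \<eta>) betaT"
proof (rule inj_onI)
  fix \<xi> \<xi>' assume "\<xi> \<in> betaT" "\<xi>' \<in> betaT" "hatU \<xi> \<eta> = hatU \<xi>' \<eta>"
  then show "\<xi> = \<xi>'" using left_factor_hatU[OF _ assms] by metis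
qed

lemma right_factor_betaT:
  assumes \<xi>: "\<xi> \<in> betaT" and "{{1}} \<notin> \<xi>"
  shows "right_factor \<xi> \<in> betaT"
  unfolding right_factor_def
proof (rule uf_pullback_betaT[OF \<xi>])
  have "TT = insert {1} (hatR TT)"
    using TT_one_or_hat TT.one TT.hat by (auto simp: hatR_def)
  then show "hatR TT \<in> \<xi>"
    using uf_Un[OF \<xi>, of "{{1}}" "hatR TT"] uf_TT[OF \<xi>] TT.one hatR_subset \<open>{{1}} \<notin> \<xi>\<close> by auto
qed (auto simp: hatR_subset hatR_mono hatR_Int hatR_Diff, auto simp: hatR_def)

lemma right_factor_neq_witness:
  assumes "\<xi> \<in> betaT" "{{1}} \<notin> \<xi>" "\<eta> \<in> betaT" "right_factor \<xi> \<noteq> \<eta>"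
  obtains B where "B \<subseteq> TT" "hatR B \<in> \<xi>" "B \<notin> \<eta>"
proof -
  have "\<not> right_factor \<xi> \<subseteq> \<eta>"
    using uf_subset_imp_eq[OF right_factor_betaT[OF assms(1,2)] assms(3)] assms(4) by blast
  then show ?thesis using that by (auto simp: right_factor_def)
qed

inductive left_depth :: "real set \<Rightarrow> nat \<Rightarrow> bool" where
  "left_depth {1} 0"
| "u \<in> TT \<Longrightarrow> v \<in> TT \<Longrightarrow> left_depth u n \<Longrightarrow> left_depth (hat u v) (Suc n)"

lemma left_depth_exists: "t \<in> TT \<Longrightarrow> \<exists>n. left_depth t n"
  by (induction rule: TT.induct) (auto intro: left_depth.intros)

lemma left_depth_unique: "left_depth t n \<Longrightarrow> left_depth t m \<Longrightarrow> n = m"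
proof (induction arbitrary: m rule: left_depth.induct)
  case 1
  then show ?case by cases (auto dest: hat_neq_one)
next
  case (2 u v n)
  from "2.prems" show ?case
  proof cases
    case 1
    then show ?thesis using hat_neq_one "2.hyps" by blast
  next
    case (2 u' v' n')
    then show ?thesis using hat_eq_iff "2.hyps" "2.IH" by auto
  qed
qed

text \<open>The trees whose leftmost branch has even length form a set E with
  hat u v \<in> E \<longleftrightarrow> u \<notin> E, hence E \<in> \<zeta> ^ \<zeta> \<longleftrightarrow> E \<notin> \<zeta>.\<close>

lemma hatU_self_neq:
  assumes \<zeta>: "\<zeta> \<in> betaT" shows "hatU \<zeta> \<zeta> \<noteq> \<zeta>"
proof
  define E where "E = {t \<in> TT. \<exists>n. even n \<and> left_depth t n}"
  have E_hat: "hat u v \<in> E \<longleftrightarrow> u \<notin> E" if uv: "u \<in> TT" "v \<in> TT" for u v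
  proof -
    obtain n where n: "left_depth u n" using left_depth_exists uv by blast
    then have "left_depth (hat u v) (Suc n)" using uv by (simp add: left_depth.intros)
    then have "hat u v \<in> E \<longleftrightarrow> even (Suc n)"
      using left_depth_unique uv TT.hat unfolding E_def by blast
    moreover have "u \<in> E \<longleftrightarrow> even n" using n left_depth_unique uv unfolding E_def by blast
    ultimately show ?thesis by simp
  qed
  have ET: "E \<subseteq> TT" by (auto simp: E_def)
  have "{v \<in> TT. hat u v \<in> E} = (if u \<notin> E then TT else {})" if "u \<in> TT" for u
    using E_hat that by auto
  then have "{u \<in> TT. {v \<in> TT. hat u v \<in> E} \<in> \<zeta>} = TT - E"
    using uf_TT[OF \<zeta>] uf_empty[OF \<zeta>] by auto
  then have "E \<in> hatU \<zeta> \<zeta> \<longleftrightarrow> TT - E \<in> \<zeta>" using ET by (simp add: hatU_mem)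
  moreover assume "hatU \<zeta> \<zeta> = \<zeta>"
  ultimately show False using uf_Diff_iff[OF \<zeta> ET] by blast
qed

definition basic_set :: "real set set \<Rightarrow> real set set set set" where
  "basic_set A = {\<xi> \<in> betaT. A \<in> \<xi>}"

lemma topspace_betaT_top [simp]: "topspace betaT_top = betaT"
proof -
  have "\<Union>{{\<xi> \<in> betaT. A \<in> \<xi>} | A. A \<subseteq> TT} = betaT"
    using uf_TT by blast
  then show ?thesis unfolding betaT_top_def by simp
qed

lemma openin_basic_set: "A \<subseteq> TT \<Longrightarrow> openin betaT_top (basic_set A)"
  unfolding betaT_top_def basic_set_def by (rule topology_generated_by_Basis) blast

lemma Hausdorff_betaT_top: "Hausdorff_space betaT_top"
  unfolding Hausdorff_space_def
proof (intro allI impI)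
  fix \<xi> \<eta> assume "\<xi> \<in> topspace betaT_top \<and> \<eta> \<in> topspace betaT_top \<and> \<xi> \<noteq> \<eta>"
  then have \<xi>\<eta>: "\<xi> \<in> betaT" "\<eta> \<in> betaT" "\<xi> \<noteq> \<eta>" by auto
  then obtain A where A: "A \<in> \<xi>" "A \<notin> \<eta>"
    using uf_subset_imp_eq by blast
  then have "A \<subseteq> TT" "TT - A \<in> \<eta>" using uf_subset[OF \<xi>\<eta>(1)] uf_Diff_iff[OF \<xi>\<eta>(2)] by auto
  moreover have "disjnt (basic_set A) (basic_set (TT - A))"
    using uf_Diff_iff \<open>A \<subseteq> TT\<close> by (auto simp: disjnt_def basic_set_def)
  ultimately show "\<exists>U V. openin betaT_top U \<and> openin betaT_top V \<and> \<xi> \<in> U \<and> \<eta> \<in> V \<and> disjnt U V"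
    using A \<xi>\<eta> openin_basic_set[of A] openin_basic_set[of "TT - A"]
    by (auto simp: basic_set_def)
qed

lemma closedin_avoiding:
  assumes "\<And>A. A \<in> \<F> \<Longrightarrow> A \<subseteq> TT"
  shows "closedin betaT_top {\<xi> \<in> betaT. \<forall>A\<in>\<F>. A \<notin> \<xi>}"
proof -
  have "betaT - {\<xi> \<in> betaT. \<forall>A\<in>\<F>. A \<notin> \<xi>} = (\<Union>A\<in>\<F>. basic_set A)"
    by (auto simp: basic_set_def)
  moreover have "openin betaT_top (\<Union>A\<in>\<F>. basic_set A)"
    using assms openin_basic_set by blast
  ultimately show ?thesis by (simp add: closedin_def)
qed

lemma continuous_map_hatU_right:
  assumes \<eta>: "\<eta> \<in> betaT"
  shows "continuous_map betaT_top betaT_top (\<lambda>\<xi>. hatU \<xi> \<eta>)"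
  unfolding betaT_top_def
proof (rule continuous_on_generated_topo, fold betaT_top_def)
  fix U assume "U \<in> {{\<xi> \<in> betaT. A \<in> \<xi>} | A. A \<subseteq> TT}"
  then obtain A where A: "A \<subseteq> TT" "U = basic_set A" by (auto simp: basic_set_def)
  define A' where "A' = {u \<in> TT. {v \<in> TT. hat u v \<in> A} \<in> \<eta>}"
  have "(\<lambda>\<xi>. hatU \<xi> \<eta>) -` U \<inter> betaT = basic_set A'"
    using A hatU_betaT[OF _ \<eta>] by (auto simp: basic_set_def hatU_mem A'_def)
  moreover have "A' \<subseteq> TT" by (auto simp: A'_def)
  ultimately show "openin betaT_top ((\<lambda>\<xi>. hatU \<xi> \<eta>) -` U \<inter> topspace betaT_top)"
    using openin_basic_set by simp
next
  show "(\<lambda>\<xi>. hatU \<xi> \<eta>) ` topspace betaT_top \<subseteq> \<Union>{{\<xi> \<in> betaT. A \<in> \<xi>} | A. A \<subseteq> TT}"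
    using hatU_betaT[OF _ \<eta>] uf_TT by auto
qed

lemma uncountable_if_disjoint_embeddings:
  assumes X: "compact_space X" "Hausdorff_space X" "topspace X \<noteq> {}"
    and f: "continuous_map X X f" "inj_on f (topspace X)"
    and g: "continuous_map X X g" "inj_on g (topspace X)"
    and fg: "disjnt (f ` topspace X) (g ` topspace X)"
  shows "uncountable (topspace X)"
proof
  assume "countable (topspace X)"
  define q where "q = from_nat_into (topspace X)"
  have q: "range q = topspace X"
    unfolding q_def using X(3) \<open>countable (topspace X)\<close> by (rule range_from_nat_into)
  \<comment> \<open>F (Suc n) is F n \<circ> f or F n \<circ> g, whichever has an image avoiding q n\<close>
  define F where "F = rec_nat id (\<lambda>n h. h \<circ> (if q n \<in> h ` f ` topspace X then g else f))"
  define c where "c n = (if q n \<in> F n ` f ` topspace X then g else f)" for n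
  have F_0: "F 0 = id" and F_Suc: "F (Suc n) = F n \<circ> c n" for n
    by (simp_all add: F_def c_def)
  have c: "continuous_map X X (c n)" "inj_on (c n) (topspace X)" for n
    using f g by (simp_all add: c_def)
  have c_image: "c n ` topspace X \<subseteq> topspace X" for n
    using c(1) continuous_map_image_subset_topspace by blast
  have F: "continuous_map X X (F n) \<and> inj_on (F n) (topspace X)" for n
  proof (induction n)
    case 0
    show ?case by (simp add: F_0)
  next
    case (Suc n)
    have "inj_on (F n \<circ> c n) (topspace X)"
      using comp_inj_on[OF c(2)] inj_on_subset[OF _ c_image] Suc by blast
    moreover have "continuous_map X X (F n \<circ> c n)"
      using continuous_map_compose[OF c(1)] Suc by blast
    ultimately show ?case unfolding F_Suc by blast
  qed
  define S where "S n = F n ` topspace X" for n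
  have "closedin X (S n)" for n
    unfolding S_def using F X(1) compact_space_def
    by (blast intro: compactin_imp_closedin[OF X(2)] image_compactin)
  moreover have "S n \<noteq> {}" for n
    using X(3) by (simp add: S_def)
  moreover have "decseq S"
  proof (rule decseq_SucI)
    show "S (Suc n) \<subseteq> S n" for n
      unfolding S_def F_Suc image_comp[symmetric] by (rule image_mono[OF c_image])
  qed
  ultimately have "(\<Inter>n. S n) \<noteq> {}"
    by (rule compact_space_imp_nest[OF X(1)])
  then obtain p where p: "\<And>n. p \<in> S n" by blast
  have avoid: "q n \<notin> S (Suc n)" for n
  proof -
    have "f ` topspace X \<subseteq> topspace X" "g ` topspace X \<subseteq> topspace X"
      using f(1) g(1) continuous_map_image_subset_topspace by blast+
    then have "F n ` f ` topspace X \<inter> F n ` g ` topspace X = F n ` (f ` topspace X \<inter> g ` topspace X)"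
      by (simp add: inj_on_image_Int[OF F[of n, THEN conjunct2]])
    then have "F n ` f ` topspace X \<inter> F n ` g ` topspace X = {}"
      using fg by (simp add: disjnt_def)
    then show ?thesis
      by (auto simp: S_def F_Suc c_def image_comp[symmetric] split: if_splits)
  qed
  obtain n where "p = q n" using p[of 0] q by (auto simp: S_def F_0)
  then show False using p[of "Suc n"] avoid by blast
qed

lemma uncountable_compact_hat_closed:
  assumes K: "K \<subseteq> betaT" "K \<noteq> {}" "compactin betaT_top K" "closed_hat K"
  shows "uncountable K"
proof -
  define X where "X = subtopology betaT_top K"
  have X: "topspace X = K" "compact_space X" "Hausdorff_space X"
    using K(1,3) Hausdorff_space_subtopology[OF Hausdorff_betaT_top]
    by (auto simp: X_def compact_space_subtopology)
  have hatU_K: "hatU \<xi> \<eta> \<in> K" if "\<xi> \<in> K" "\<eta> \<in> K" for \<xi> \<eta>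
    using K(4) that unfolding closed_hat_def by blast
  have translation: "continuous_map X X (\<lambda>\<xi>. hatU \<xi> a) \<and> inj_on (\<lambda>\<xi>. hatU \<xi> a) (topspace X)"
    if "a \<in> K" for a
  proof
    show "continuous_map X X (\<lambda>\<xi>. hatU \<xi> a)"
      using that K(1) hatU_K continuous_map_hatU_right
      by (auto simp: X_def continuous_map_in_subtopology continuous_map_from_subtopology)
    show "inj_on (\<lambda>\<xi>. hatU \<xi> a) (topspace X)"
      using inj_on_subset[OF inj_on_hatU_right K(1)] that K(1) X(1) by blast
  qed
  obtain z where z: "z \<in> K" using K(2) by blast
  have "disjnt ((\<lambda>\<xi>. hatU \<xi> z) ` K) ((\<lambda>\<xi>. hatU \<xi> (hatU z z)) ` K)"
  proof -
    have "hatU \<xi> z \<noteq> hatU \<xi>' (hatU z z)" if "\<xi> \<in> K" "\<xi>' \<in> K" for \<xi> \<xi>'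
      using that z K(1) hatU_self_neq right_factor_hatU hatU_betaT by (metis subsetD)
    then show ?thesis by (auto simp: disjnt_def)
  qed
  then show ?thesis
    using uncountable_if_disjoint_embeddings[OF X(2,3)] translation z hatU_K[OF z z] K(2) X(1)
    by metis
qed

lemma countable_principal: "countable {\<xi> \<in> betaT. \<exists>s. {s} \<in> \<xi>}"
proof -
  have principal: "\<xi> = {A. A \<subseteq> TT \<and> s \<in> A}" if "\<xi> \<in> betaT" "{s} \<in> \<xi>" for \<xi> s
  proof -
    have "s \<in> A" if "A \<in> \<xi>" for A
      using uf_Int[OF \<open>\<xi> \<in> betaT\<close> that \<open>{s} \<in> \<xi>\<close>] uf_empty[OF \<open>\<xi> \<in> betaT\<close>]
      by (metis Int_insert_right_if0 inf_bot_right)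
    moreover have "A \<in> \<xi>" if "A \<subseteq> TT" "s \<in> A" for A
      using that uf_mono[OF \<open>\<xi> \<in> betaT\<close> \<open>{s} \<in> \<xi>\<close>] by blast
    ultimately show ?thesis using uf_subset[OF \<open>\<xi> \<in> betaT\<close>] by blast
  qed
  have "{\<xi> \<in> betaT. \<exists>s. {s} \<in> \<xi>} \<subseteq> (\<lambda>s. {A. A \<subseteq> TT \<and> s \<in> A}) ` TT"
  proof
    fix \<xi> assume "\<xi> \<in> {\<xi> \<in> betaT. \<exists>s. {s} \<in> \<xi>}"
    then obtain s where s: "\<xi> \<in> betaT" "{s} \<in> \<xi>" by blast
    then have "s \<in> TT" using uf_subset[OF s] by blast
    with principal[OF s] show "\<xi> \<in> (\<lambda>s. {A. A \<subseteq> TT \<and> s \<in> A}) ` TT" by (rule image_eqI)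
  qed
  then show ?thesis by (rule countable_subset) (simp add: countable_TT)
qed

definition diffuse :: "real set set set \<Rightarrow> bool" where
  "diffuse \<xi> \<longleftrightarrow> (\<forall>s. {s} \<notin> \<xi>) \<and> (\<forall>t\<in>TT. hatL {t} \<notin> \<xi>)"

lemma hatU_notin_if_fibres_subsingleton:
  assumes \<xi>: "\<xi> \<in> betaT" "\<forall>s. {s} \<notin> \<xi>" and \<eta>: "\<eta> \<in> betaT"
    and single: "\<And>u u'. u \<in> TT \<Longrightarrow> u' \<in> TT \<Longrightarrow> {v \<in> TT. hat u v \<in> W} \<noteq> {} \<Longrightarrow>
      {v \<in> TT. hat u' v \<in> W} \<noteq> {} \<Longrightarrow> u = u'"
  shows "W \<notin> hatU \<xi> \<eta>"
proof
  define P where "P = {u \<in> TT. {v \<in> TT. hat u v \<in> W} \<in> \<eta>}"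
  assume "W \<in> hatU \<xi> \<eta>"
  then have "P \<in> \<xi>" by (simp add: hatU_mem P_def)
  then obtain u0 where u0: "u0 \<in> P" using uf_nonempty[OF \<xi>(1)] by blast
  have "u = u0" if "u \<in> P" for u
  proof (rule single)
    show "u \<in> TT" "u0 \<in> TT" using that u0 by (simp_all add: P_def)
    have "{v \<in> TT. hat u v \<in> W} \<in> \<eta>" "{v \<in> TT. hat u0 v \<in> W} \<in> \<eta>"
      using that u0 by (simp_all add: P_def)
    then show "{v \<in> TT. hat u v \<in> W} \<noteq> {}" "{v \<in> TT. hat u0 v \<in> W} \<noteq> {}"
      using uf_nonempty[OF \<eta>] by blast+
  qed
  then have "P = {u0}" using u0 by blast
  then show False using \<open>P \<in> \<xi>\<close> \<xi>(2) by simp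
qed

lemma diffuse_hatU:
  assumes "\<xi> \<in> betaT" "\<eta> \<in> betaT" "\<forall>s. {s} \<notin> \<xi>"
  shows "diffuse (hatU \<xi> \<eta>)"
  unfolding diffuse_def
proof (intro conjI allI ballI)
  show "{s} \<notin> hatU \<xi> \<eta>" for s
    by (rule hatU_notin_if_fibres_subsingleton[OF assms(1,3,2)]) (use hat_eq_iff in blast)
  show "hatL {t} \<notin> hatU \<xi> \<eta>" if "t \<in> TT" for t
    by (rule hatU_notin_if_fibres_subsingleton[OF assms(1,3,2)])
      (use that hat_eq_iff in \<open>auto simp: hatL_def\<close>)
qed

lemma diffuse_iff_avoiding:
  assumes "\<xi> \<in> betaT"
  shows "diffuse \<xi> \<longleftrightarrow> (\<forall>A\<in>{{s} | s. s \<in> TT} \<union> {hatL {t} | t. t \<in> TT}. A \<notin> \<xi>)"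
  unfolding diffuse_def using uf_subset[OF assms] by blast

lemma minimal_hat_closed_diffuse:
  assumes K: "K \<subseteq> betaT" "K \<noteq> {}" "compactin betaT_top K" "closed_hat K"
    and minimal: "\<forall>L. L \<subseteq> K \<and> L \<noteq> {} \<and> compactin betaT_top L \<and> closed_hat L \<longrightarrow> L = K"
    and "\<xi> \<in> K"
  shows "diffuse \<xi>"
proof -
  define \<F> where "\<F> = {{s} | s. s \<in> TT} \<union> {hatL {t} | t. t \<in> TT}"
  define L where "L = {\<xi> \<in> K. diffuse \<xi>}"
  have "L = K \<inter> {\<xi> \<in> betaT. \<forall>A\<in>\<F>. A \<notin> \<xi>}"
    using K(1) diffuse_iff_avoiding by (auto simp: L_def \<F>_def)
  moreover have "closedin betaT_top {\<xi> \<in> betaT. \<forall>A\<in>\<F>. A \<notin> \<xi>}"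
    by (rule closedin_avoiding) (use hatL_subset in \<open>auto simp: \<F>_def\<close>)
  ultimately have "closedin betaT_top L"
    using closedin_Int[OF compactin_imp_closedin[OF Hausdorff_betaT_top K(3)]] by simp
  then have "compactin betaT_top L"
    by (rule closed_compactin[OF K(3), rotated]) (simp add: L_def)
  moreover have "L \<noteq> {}"
  proof -
    have "uncountable K" by (rule uncountable_compact_hat_closed[OF K(1-4)])
    then have "\<not> K \<subseteq> {\<xi> \<in> betaT. \<exists>s. {s} \<in> \<xi>}"
      using countable_principal countable_subset by blast
    then obtain \<eta> where \<eta>: "\<eta> \<in> K" "\<eta> \<notin> {\<xi> \<in> betaT. \<exists>s. {s} \<in> \<xi>}"
      by blast
    then have "hatU \<eta> \<eta> \<in> L"
      using K(1,4) diffuse_hatU by (auto simp: L_def closed_hat_def)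
    then show ?thesis by blast
  qed
  moreover have "closed_hat L"
    unfolding closed_hat_def
  proof (intro ballI)
    fix \<xi> \<eta> assume "\<xi> \<in> L" "\<eta> \<in> L"
    then have "\<xi> \<in> K" "\<eta> \<in> K" "\<forall>s. {s} \<notin> \<xi>" by (auto simp: L_def diffuse_def)
    then show "hatU \<xi> \<eta> \<in> L"
      using K(1,4) diffuse_hatU[of \<xi> \<eta>] by (auto simp: L_def closed_hat_def)
  qed
  ultimately have "L = K" using minimal by (auto simp: L_def)
  then show ?thesis using \<open>\<xi> \<in> K\<close> by (auto simp: L_def)
qed

lemma separating_set:
  fixes d :: "nat \<Rightarrow> real set set set"
  assumes d: "\<And>n. d n \<in> betaT" "\<And>n. diffuse (d n)"
    and \<eta>: "\<eta> \<in> betaT" "\<And>n. right_factor (d n) \<noteq> \<eta>"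
  obtains W where "W \<subseteq> TT" "\<And>\<zeta>. \<zeta> \<in> betaT \<Longrightarrow> W \<in> hatU \<zeta> \<eta>" "\<And>n. W \<notin> d n"
proof -
  have "\<exists>B. B \<subseteq> TT \<and> hatR B \<in> d n \<and> B \<notin> \<eta>" for n
    using right_factor_neq_witness[OF d(1) _ \<eta>(1,2)] d(2) TT.one
    unfolding diffuse_def by metis
  then obtain B where B_TT: "\<And>n. B n \<subseteq> TT" and hatR_B: "\<And>n. hatR (B n) \<in> d n"
    and B: "\<And>n. B n \<notin> \<eta>"
    by metis
  define x where "x = from_nat_into TT"
  have x: "range x = TT"
    unfolding x_def using TT.one countable_TT by (intro range_from_nat_into) auto
  have hatL_x: "hatL {x m} \<subseteq> TT" for m
    using hatL_subset[of "{x m}"] x by blast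
  define V where "V m = TT - (\<Union>k\<le>m. B k)" for m
  have V: "V m \<in> \<eta>" for m
    using uf_UN_notin[OF \<eta>(1), of "{..m}" B] B B_TT uf_Diff_iff[OF \<eta>(1), of "\<Union>k\<le>m. B k"]
    unfolding V_def by blast
  \<comment> \<open>W \<inter> hatR (B n) lies in the left cones hatL {x m} with m < n\<close>
  define W where "W = {hat (x m) v | m v. v \<in> V m}"
  have W_TT: "W \<subseteq> TT" using x TT.hat by (auto simp: W_def V_def)
  show ?thesis
  proof (rule that[OF W_TT])
    fix \<zeta> assume "\<zeta> \<in> betaT"
    have "{v \<in> TT. hat u v \<in> W} \<in> \<eta>" if "u \<in> TT" for u
    proof -
      obtain m where "u = x m" using x \<open>u \<in> TT\<close> by blast
      then have "V m \<subseteq> {v \<in> TT. hat u v \<in> W}" by (auto simp: W_def V_def)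
      then show ?thesis using uf_mono[OF \<eta>(1) V] by blast
    qed
    then have "{u \<in> TT. {v \<in> TT. hat u v \<in> W} \<in> \<eta>} = TT" by blast
    then show "W \<in> hatU \<zeta> \<eta>"
      using W_TT uf_TT[OF \<open>\<zeta> \<in> betaT\<close>] by (simp add: hatU_mem)
  next
    fix n
    have "W \<inter> hatR (B n) \<subseteq> (\<Union>m<n. hatL {x m})"
    proof
      fix e assume "e \<in> W \<inter> hatR (B n)"
      then obtain m v where e: "e = hat (x m) v" "v \<in> V m" "e \<in> hatR (B n)"
        by (auto simp: W_def)
      have "x m \<in> TT" "v \<in> TT" using x e(2) by (auto simp: V_def)
      then have "v \<in> B n" using e hat_mem_hatR_iff B_TT by blast
      then have "m < n" using e(2) by (auto simp: V_def not_less)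
      then show "e \<in> (\<Union>m<n. hatL {x m})" using e(1) \<open>v \<in> TT\<close> by (auto simp: hatL_def)
    qed
    moreover have "(\<Union>m<n. hatL {x m}) \<notin> d n"
      using d(2)[of n] x hatL_x by (intro uf_UN_notin[OF d(1)]) (auto simp: diffuse_def)
    moreover have "W \<in> d n \<Longrightarrow> W \<inter> hatR (B n) \<in> d n" using uf_Int[OF d(1) _ hatR_B] by blast
    ultimately show "W \<notin> d n"
      using uf_mono[OF d(1), of "W \<inter> hatR (B n)" n "\<Union>m<n. hatL {x m}"] hatL_x by blast
  qed
qed

theorem proposition6p5:
  assumes "K \<subseteq> betaT" and "K \<noteq> {}" and "compactin betaT_top K" and "closed_hat K"
    and "\<forall>L. L \<subseteq> K \<and> L \<noteq> {} \<and> compactin betaT_top L \<and> closed_hat L \<longrightarrow> L = K"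
  shows "\<not> separable_space (subtopology betaT_top K)"
proof
  let ?X = "subtopology betaT_top K"
  assume "separable_space ?X"
  moreover have "topspace ?X = K" using assms(1) by auto
  ultimately obtain C where C: "countable C" "C \<subseteq> K" "?X closure_of C = K"
    unfolding separable_space_def by metis
  then have "C \<noteq> {}" using assms(2) by auto
  define d where "d = from_nat_into C"
  have d: "range d = C" unfolding d_def by (rule range_from_nat_into[OF \<open>C \<noteq> {}\<close> C(1)])
  have "uncountable K" by (rule uncountable_compact_hat_closed[OF assms(1-4)])
  then obtain \<eta> where \<eta>: "\<eta> \<in> K" "\<eta> \<notin> right_factor ` C"
    using countable_image[OF C(1)] countable_subset by (metis subsetI)
  obtain W where W: "W \<subseteq> TT" "\<And>\<zeta>. \<zeta> \<in> betaT \<Longrightarrow> W \<in> hatU \<zeta> \<eta>" "\<And>n. W \<notin> d n"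
  proof (rule separating_set[of d \<eta>])
    fix n
    have "d n \<in> C" using d by blast
    then show "d n \<in> betaT" "diffuse (d n)" "right_factor (d n) \<noteq> \<eta>"
      using C(2) assms(1) \<eta>(2) minimal_hat_closed_diffuse[OF assms] by auto
  qed (use assms(1) \<eta>(1) in auto)
  obtain z where z: "z \<in> K" using assms(2) by blast
  have "W \<in> hatU z \<eta>" using W(2) z assms(1) by blast
  then have \<tau>: "hatU z \<eta> \<in> K \<inter> basic_set W"
    using assms(1,4) z \<eta>(1) hatU_betaT by (auto simp: closed_hat_def basic_set_def)
  then have "hatU z \<eta> \<in> ?X closure_of C" using C(3) by simp
  moreover have "openin ?X (K \<inter> basic_set W)"
    by (rule openin_subtopology_Int2[OF openin_basic_set[OF W(1)]])
  ultimately obtain \<zeta> where "\<zeta> \<in> C" "\<zeta> \<in> basic_set W"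
    using \<tau> unfolding in_closure_of by blast
  then show False using W(3) d by (auto simp: basic_set_def)
qed

end
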